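(* Let $r$ be a positive integer and $k,a\in\mathbb{K}$. Then $$\frac{d^{r+1}}{dx^{r+1}}\left[x^r\left(\frac{x}{x-a}\right)^k\right]=(-a)^{r+1}k^{(r+1)}\frac{x^{k-1}}{(x-a)^{k+r+1}}.$$
   Context: $\mathbb{K}\in\{\mathbb{Q},\mathbb{R},\mathbb{C}\}$. $k^{(n)}=k(k+1)\cdots(k+n-1)$ is the rising Pochhammer symbol. The identity is understood in formal Laurent series in $x^{-1}$: $\left(\frac{x}{x-a}\right)^k:=(1-a/x)^{-k}=\sum_{i\ge0}\binom{-k}{i}(-a/x)^i$ (binomial series), and $\frac{x^{k-1}}{(x-a)^{k+r+1}}:=x^{-r-2}(1-a/x)^{-k-r-1}$, with termwise differentiation. *)

theory Defs
  imports Complex_Main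
begin

text \<open>Formal Laurent series in x^(-1) are represented by their coefficient
  functions: f n is the coefficient of x^n (n an integer).\<close>

text \<open>Termwise derivative: the coefficient of x^n in f' is (n+1) times the
  coefficient of x^(n+1) in f.\<close>
definition ldiff :: "(int \<Rightarrow> 'a::field_char_0) \<Rightarrow> int \<Rightarrow> 'a" where
  "ldiff f = (\<lambda>n. of_int (n + 1) * f (n + 1))"

text \<open>binser a c m is the series x^m * (1 - a/x)^(-c)
  = sum over i of ((-c) gchoose i) * (-a)^i * x^(m-i).\<close>
definition binser :: "'a::field_char_0 \<Rightarrow> 'a \<Rightarrow> int \<Rightarrow> int \<Rightarrow> 'a" where
  "binser a c m = (\<lambda>n. if n \<le> m then ((- c) gchoose nat (m - n)) * (- a) ^ nat (m - n) else 0)"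

end

theory Submission
  imports Defs
begin

text \<open>Differentiating \<open>x^r (1 - a/x)^(-k)\<close> termwise \<open>r + 1\<close> times multiplies the
  coefficient of \<open>x^(n+r+1)\<close> by the rising factorial \<open>pochhammer (n+1) (r+1)\<close>. This
  factor vanishes for \<open>-r-2 < n < 0\<close>, and for \<open>n \<ge> 0\<close> the coefficient itself is zero,
  so only the exponents \<open>n = -r-2-i\<close> survive. For these, splitting rising factorials
  turns \<open>pochhammer (-(i+r+1)) (r+1) * (-k gchoose i+r+1)\<close> into
  \<open>pochhammer k (r+1) * (-(k+r+1) gchoose i)\<close>.\<close>

lemma ldiff_funpow:
  "(ldiff ^^ m) f = (\<lambda>n. pochhammer (of_int (n + 1)) m * f (n + int m))"
proof (induction m)
  case 0
  then show ?case by simp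
next
  case (Suc m)
  show ?case
  proof
    fix n
    have "(ldiff ^^ Suc m) f n
        = of_int (n + 1) * (pochhammer (of_int (n + 1) + 1) m * f (n + 1 + int m))"
      by (simp add: Suc.IH ldiff_def)
    also have "\<dots> = pochhammer (of_int (n + 1)) (Suc m) * f (n + int (Suc m))"
      by (simp add: pochhammer_rec add.assoc)
    finally show "(ldiff ^^ Suc m) f n = pochhammer (of_int (n + 1)) (Suc m) * f (n + int (Suc m))" .
  qed
qed

lemma pochhammer_of_int_eq_0:
  assumes "z \<le> 0" and "- int m < z"
  shows "pochhammer (of_int z :: 'a::field_char_0) m = 0"
  unfolding pochhammer_eq_0_iff
  by (rule exI[of _ "nat (- z)"]) (use assms in auto)

lemma binser_diff_of_nat:
  "binser a c m (m - int j) = (- c gchoose j) * (- a) ^ j"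
  by (simp add: binser_def)

lemma binser_eq_0:
  "m < n \<Longrightarrow> binser a c m n = 0"
  by (simp add: binser_def)

lemma pochhammer_minus_mult_gbinomial_minus:
  fixes k :: "'a::field_char_0"
  shows "pochhammer (- of_nat (i + m)) m * (- k gchoose (i + m))
       = pochhammer k m * (- (k + of_nat m) gchoose i)"
proof -
  define p where "p = pochhammer (of_nat i + 1 :: 'a) m"
  have minus: "pochhammer (- of_nat (i + m)) m = (-1) ^ m * p"
    using pochhammer_minus[of "of_nat (i + m) :: 'a" m] by (simp add: p_def algebra_simps)
  have fact_split: "fact (i + m) = (fact i :: 'a) * p"
    using pochhammer_product'[of "1::'a" i m] by (simp add: pochhammer_fact p_def add.commute)
  have poch_split: "pochhammer k (i + m) = pochhammer k m * pochhammer (k + of_nat m) i"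
    using pochhammer_product'[of k m i] by (simp add: add.commute)
  have "p \<noteq> 0"
    using fact_split fact_nonzero[of "i + m", where 'a='a] by auto
  then have "pochhammer (- of_nat (i + m)) m * (- k gchoose (i + m))
      = (-1) ^ m * (-1) ^ (i + m) * pochhammer k (i + m) / fact i"
    unfolding minus gbinomial_pochhammer fact_split by (simp add: field_simps)
  also have "\<dots> = pochhammer k m * ((-1) ^ i * pochhammer (k + of_nat m) i / fact i)"
    by (simp add: poch_split power_add flip: power_mult_distrib)
  finally show ?thesis
    by (simp add: gbinomial_pochhammer algebra_simps)
qed

lemma pochhammer_mult_binser_diff_of_nat:
  fixes a k :: "'a::field_char_0"
  shows "pochhammer (- of_nat (i + m)) m * binser a k p (p - int (i + m))
       = (- a) ^ m * pochhammer k m * binser a (k + of_nat m) q (q - int i)"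
proof -
  have "pochhammer (- of_nat (i + m)) m * binser a k p (p - int (i + m))
      = (- a) ^ m * (- a) ^ i * (pochhammer (- of_nat (i + m)) m * (- k gchoose (i + m)))"
    by (simp only: binser_diff_of_nat power_add ac_simps)
  also have "\<dots> = (- a) ^ m * (- a) ^ i * (pochhammer k m * (- (k + of_nat m) gchoose i))"
    by (simp only: pochhammer_minus_mult_gbinomial_minus)
  finally show ?thesis
    by (simp only: binser_diff_of_nat ac_simps)
qed

theorem lemma4p5:
  fixes k a :: "'a::field_char_0" and r :: nat
  assumes "r > 0"
  shows "(ldiff ^^ (r + 1)) (binser a k (int r))
       = (\<lambda>n. (- a) ^ (r + 1) * pochhammer k (r + 1)
                * binser a (k + of_nat r + 1) (- int r - 2) n)"
proof
  fix n :: int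
  have "(ldiff ^^ (r + 1)) (binser a k (int r)) n
      = pochhammer (of_int (n + 1)) (r + 1) * binser a k (int r) (n + int (r + 1))"
    by (simp only: ldiff_funpow)
  also have "\<dots> = (- a) ^ (r + 1) * pochhammer k (r + 1) * binser a (k + of_nat r + 1) (- int r - 2) n"
  proof -
    consider (surviving) i where "n = - int r - 2 - int i"
      | (killed) "- int r - 2 < n" "n < 0" | (vanishing) "0 \<le> n"
    proof (cases "n \<le> - int r - 2")
      case True
      then show ?thesis using that(1)[of "nat (- int r - 2 - n)"] by simp
    next
      case False
      then show ?thesis using that(2,3) by linarith
    qed
    then show ?thesis
    proof cases
      case surviving
      have "n + int (r + 1) = int r - int (i + (r + 1))" "of_int (n + 1) = (- of_nat (i + (r + 1)) :: 'a)"
          "k + of_nat r + 1 = k + of_nat (r + 1)"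
        by (simp_all add: surviving)
      then show ?thesis
        using pochhammer_mult_binser_diff_of_nat[of i "r + 1" a k "int r" "- int r - 2"]
        by (simp only: flip: surviving)
    next
      case killed
      then have "pochhammer (of_int (n + 1) :: 'a) (r + 1) = 0"
        by (intro pochhammer_of_int_eq_0) linarith+
      with killed show ?thesis
        by (simp add: binser_eq_0)
    qed (simp add: binser_eq_0)
  qed
  finally show "(ldiff ^^ (r + 1)) (binser a k (int r)) n
      = (- a) ^ (r + 1) * pochhammer k (r + 1) * binser a (k + of_nat r + 1) (- int r - 2) n" .
qed

end
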